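(* Let $\tilde L$ be a minimum-size counterexample. Then every element $x\in\tilde L\setminus\{0_{\tilde L},1_{\tilde L}\}$ is comparable with at least four elements of $\tilde L\setminus\{x\}$.
   Context: For a poset $P$, $x$ upper covers $y$ if $y<x$ with nothing strictly between; join-irreducible: upper covers exactly one element. For $x\in P$, ${\uparrow}x=\{y: x\le y\}$. $0_{\tilde L}$ and $1_{\tilde L}$ denote the least and greatest elements. A counterexample is a finite lattice $L$ with $|L|>1$ in which every join-irreducible $j$ satisfies $|{\uparrow}j|>|L|/2$; a minimum-size counterexample is a counterexample $\tilde L$ such that no counterexample has fewer elements. *)

theory Defs
  imports "HOL-Algebra.Lattice"
begin

(* Finite lattices are HOL-Algebra lattices (record 'a gorder with carrier and le,
   locale lattice, which includes partial_order, i.e. eq is equality). *)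

definition upper_covers :: "'a gorder \<Rightarrow> 'a \<Rightarrow> 'a \<Rightarrow> bool" where
  "upper_covers L x y \<longleftrightarrow> x \<in> carrier L \<and> y \<in> carrier L \<and> y \<sqsubseteq>\<^bsub>L\<^esub> x \<and> y \<noteq> x \<and>
     \<not> (\<exists>z \<in> carrier L. y \<sqsubseteq>\<^bsub>L\<^esub> z \<and> z \<noteq> y \<and> z \<sqsubseteq>\<^bsub>L\<^esub> x \<and> z \<noteq> x)"

definition join_irreducible :: "'a gorder \<Rightarrow> 'a \<Rightarrow> bool" where
  "join_irreducible L j \<longleftrightarrow> j \<in> carrier L \<and> (\<exists>!y. upper_covers L j y)"

definition up_set :: "'a gorder \<Rightarrow> 'a \<Rightarrow> 'a set" where
  "up_set L x = {y \<in> carrier L. x \<sqsubseteq>\<^bsub>L\<^esub> y}"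

definition counterexample :: "'a gorder \<Rightarrow> bool" where
  "counterexample L \<longleftrightarrow> lattice L \<and> finite (carrier L) \<and> card (carrier L) > 1 \<and>
     (\<forall>j. join_irreducible L j \<longrightarrow> 2 * card (up_set L j) > card (carrier L))"

(* Every finite lattice is isomorphic to one whose carrier is a subset of nat,
   so quantifying over lattices on nat covers all finite lattices up to isomorphism. *)
definition min_counterexample :: "'a gorder \<Rightarrow> bool" where
  "min_counterexample L \<longleftrightarrow> counterexample L \<and>
     (\<forall>M :: nat gorder. counterexample M \<longrightarrow> card (carrier L) \<le> card (carrier M))"

end

theory Submission
  imports Defs
begin

text \<open>
  Suppose x is comparable with at
  most three other elements; besides the bounds these can only be a single y. If y lies below x,
  then y is the unique lower cover of x, so x is join-irreducible although its up-set has only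
  two of the at least four elements. If x is an atom, it is join-irreducible; were it also a
  coatom, the lattice would have three elements and the top would be join-irreducible, which is
  impossible in a counterexample. So y lies above x, whence the lattice has at most five
  elements, y is not join-irreducible and hence some w strictly below y is not below x. But then
  every element other than the top lies below y, and once more the top is join-irreducible.
\<close>

definition comparables :: "'a gorder \<Rightarrow> 'a \<Rightarrow> 'a set" where
  "comparables L x = {y \<in> carrier L - {x}. x \<sqsubseteq>\<^bsub>L\<^esub> y \<or> y \<sqsubseteq>\<^bsub>L\<^esub> x}"

lemma join_irreducibleI:
  fixes L :: "'a gorder" (structure)
  assumes po: "partial_order L"
    and j: "j \<in> carrier L" and c: "c \<in> carrier L" "c \<sqsubseteq> j" "c \<noteq> j"
    and below_c: "\<And>z. z \<in> carrier L \<Longrightarrow> z \<sqsubseteq> j \<Longrightarrow> z \<noteq> j \<Longrightarrow> z \<sqsubseteq> c"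
  shows "join_irreducible L j"
proof -
  have "upper_covers L j c"
    unfolding upper_covers_def
    using j c below_c partial_order.le_antisym[OF po] by blast
  moreover have "y = c" if "upper_covers L j y" for y
    using that below_c c unfolding upper_covers_def by blast
  ultimately show ?thesis
    unfolding join_irreducible_def using j by blast
qed

lemma not_join_irreducibleE:
  fixes L :: "'a gorder" (structure)
  assumes po: "partial_order L" and not_ji: "\<not> join_irreducible L j"
    and j: "j \<in> carrier L" and c: "c \<in> carrier L" "c \<sqsubseteq> j" "c \<noteq> j"
  obtains w where "w \<in> carrier L" "w \<sqsubseteq> j" "w \<noteq> j" "\<not> w \<sqsubseteq> c"
proof -
  have False if "\<And>w. w \<in> carrier L \<Longrightarrow> w \<sqsubseteq> j \<Longrightarrow> w \<noteq> j \<Longrightarrow> w \<sqsubseteq> c"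
    using join_irreducibleI[OF po j c that] not_ji by contradiction
  then show thesis
    using that by blast
qed

lemma (in lattice) bounded_lattice_if_finite:
  assumes "finite (carrier L)" "carrier L \<noteq> {}"
  shows "bounded_lattice L"
proof unfold_locales
  have "\<Sqinter>(carrier L) \<in> Lower L (carrier L)"
    using finite_inf_greatest[OF assms(1) subset_refl assms(2)] by (rule greatest_mem)
  then have "least L (\<Sqinter>(carrier L)) (carrier L)"
    using finite_inf_closed[OF assms(1) subset_refl assms(2)]
    unfolding least_def Lower_def by blast
  then show "\<exists>x. least L x (carrier L)" ..
  have "\<Squnion>(carrier L) \<in> Upper L (carrier L)"
    using finite_sup_least[OF assms(1) subset_refl assms(2)] by (rule least_mem)
  then have "greatest L (\<Squnion>(carrier L)) (carrier L)"
    using finite_sup_closed[OF assms(1) subset_refl assms(2)]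
    unfolding greatest_def Upper_def by blast
  then show "\<exists>x. greatest L x (carrier L)" ..
qed

context bounded_lattice
begin

lemma le_bottom_iff: "x \<in> carrier L \<Longrightarrow> x \<sqsubseteq> \<bottom> \<longleftrightarrow> x = \<bottom>"
  by (metis bottom_closed bottom_lower le_antisym)

lemma top_le_iff: "x \<in> carrier L \<Longrightarrow> \<top> \<sqsubseteq> x \<longleftrightarrow> x = \<top>"
  by (metis top_closed top_higher le_antisym)

end

locale counterexample_lattice = bounded_lattice L for L :: "'a gorder" (structure) +
  assumes counterexample: "counterexample L"
begin

lemma finite_carrier: "finite (carrier L)"
  using counterexample unfolding counterexample_def by simp

lemma card_le_card_carrier: "S \<subseteq> carrier L \<Longrightarrow> card S \<le> card (carrier L)"
  using finite_carrier by (rule card_mono)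

lemma card_carrier_less_join_irreducible:
  assumes "join_irreducible L j" "up_set L j \<subseteq> S" "finite S"
  shows "card (carrier L) < 2 * card S"
proof -
  have "card (carrier L) < 2 * card (up_set L j)"
    using counterexample assms(1) unfolding counterexample_def by blast
  also have "\<dots> \<le> 2 * card S"
    using card_mono[OF assms(3,2)] by simp
  finally show ?thesis .
qed

lemma card_carrier_less_4:
  assumes "join_irreducible L j" "up_set L j \<subseteq> {j, \<top>}"
  shows "card (carrier L) < 4"
proof -
  have "card (carrier L) < 2 * card {j, \<top>}"
    using assms by (rule card_carrier_less_join_irreducible) simp
  moreover have "card {j, \<top>} \<le> 2"
    by (simp add: card_insert_le_m1)
  ultimately show ?thesis
    by linarith
qed

lemma bottom_neq_top: "\<bottom> \<noteq> \<top>"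
proof
  assume bottom_eq_top: "\<bottom> = \<top>"
  have "carrier L \<subseteq> {\<bottom>}"
  proof
    fix z assume z: "z \<in> carrier L"
    then have "z \<sqsubseteq> \<bottom>"
      unfolding bottom_eq_top by (rule top_higher)
    with z show "z \<in> {\<bottom>}"
      using le_bottom_iff by simp
  qed
  then have "card (carrier L) \<le> 1"
    using card_mono[of "{\<bottom>}"] by simp
  with counterexample show False
    unfolding counterexample_def by simp
qed

lemma top_not_join_irreducible: "\<not> join_irreducible L \<top>"
proof
  assume "join_irreducible L \<top>"
  moreover have "up_set L \<top> \<subseteq> {\<top>}"
    unfolding up_set_def using top_le_iff by blast
  ultimately have "card (carrier L) < 2"
    using card_carrier_less_join_irreducible[of \<top> "{\<top>}"] by simp
  with counterexample show False
    unfolding counterexample_def by simp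
qed

text \<open>Otherwise c would be the unique lower cover of the top.\<close>

lemma not_all_below:
  assumes c: "c \<in> carrier L" "c \<noteq> \<top>"
    and below_c: "\<And>z. z \<in> carrier L \<Longrightarrow> z \<noteq> \<top> \<Longrightarrow> z \<sqsubseteq> c"
  shows False
proof -
  have "join_irreducible L \<top>"
  proof (rule join_irreducibleI[OF partial_order_axioms top_closed c(1) top_higher[OF c(1)] c(2)])
    fix z assume "z \<in> carrier L" "z \<sqsubseteq> \<top>" "z \<noteq> \<top>"
    then show "z \<sqsubseteq> c"
      by (intro below_c)
  qed
  with top_not_join_irreducible show False ..
qed

lemma comparables_eq_if_card_le_3:
  assumes x: "x \<in> carrier L" "x \<noteq> \<bottom>" "x \<noteq> \<top>"
    and card: "card (comparables L x) \<le> 3"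
    and y: "y \<in> comparables L x" "y \<noteq> \<bottom>" "y \<noteq> \<top>"
  shows "comparables L x = {\<bottom>, y, \<top>}"
proof (rule card_seteq[symmetric])
  show "finite (comparables L x)"
    using finite_carrier unfolding comparables_def by simp
  show "{\<bottom>, y, \<top>} \<subseteq> comparables L x"
    using x y unfolding comparables_def by auto
  show "card (comparables L x) \<le> card {\<bottom>, y, \<top>}"
    using card y bottom_neq_top by simp
qed

lemma up_set_subset_if_comparables_eq:
  assumes "comparables L x = {\<bottom>, y, \<top>}" "x \<in> carrier L" "x \<noteq> \<bottom>"
  shows "up_set L x \<subseteq> {x, y, \<top>}"
proof
  fix z assume "z \<in> up_set L x"
  then have z: "z \<in> carrier L" "x \<sqsubseteq> z"
    unfolding up_set_def by auto
  then have "z \<in> {\<bottom>, y, \<top>} \<or> z = x"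
    unfolding assms(1)[symmetric] comparables_def by auto
  moreover have "z \<noteq> \<bottom>"
    using z assms(2,3) le_bottom_iff by force
  ultimately show "z \<in> {x, y, \<top>}"
    by blast
qed

lemma join_irreducible_if_atom:
  assumes "x \<in> carrier L" "x \<noteq> \<bottom>"
    and "\<And>z. z \<in> carrier L \<Longrightarrow> z \<sqsubseteq> x \<Longrightarrow> z \<noteq> x \<Longrightarrow> z = \<bottom>"
  shows "join_irreducible L x"
  using join_irreducibleI[OF partial_order_axioms assms(1) bottom_closed
      bottom_lower[OF assms(1)] assms(2)[symmetric]] assms(3) by fastforce

lemma card_comparables_ge_4_if_not_atom:
  assumes x: "x \<in> carrier L" "x \<noteq> \<top>"
    and y: "y \<in> carrier L" "y \<sqsubseteq> x" "y \<noteq> x" "y \<noteq> \<bottom>"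
  shows "4 \<le> card (comparables L x)"
proof (rule ccontr)
  have x_ne_bottom: "x \<noteq> \<bottom>"
    using y le_bottom_iff by force
  have y_ne_top: "y \<noteq> \<top>"
    using x y top_le_iff by force
  have "y \<in> comparables L x"
    using x y unfolding comparables_def by simp
  moreover assume "\<not> 4 \<le> card (comparables L x)"
  ultimately have C: "comparables L x = {\<bottom>, y, \<top>}"
    by (intro comparables_eq_if_card_le_3[OF x(1) x_ne_bottom x(2) _ _ y(4) y_ne_top]) simp_all
  have "join_irreducible L x"
  proof (rule join_irreducibleI[OF partial_order_axioms x(1) y(1-3)])
    fix z assume z: "z \<in> carrier L" "z \<sqsubseteq> x" "z \<noteq> x"
    then have "z \<in> {\<bottom>, y, \<top>}"
      unfolding C[symmetric] comparables_def by simp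
    moreover have "z \<noteq> \<top>"
      using z x top_le_iff by force
    ultimately show "z \<sqsubseteq> y"
      using y by auto
  qed
  moreover have "up_set L x \<subseteq> {x, \<top>}"
  proof
    fix z assume z: "z \<in> up_set L x"
    have "\<not> x \<sqsubseteq> y"
      using le_antisym[OF y(2) _ y(1) x(1)] y(3) by blast
    with z have "z \<noteq> y"
      unfolding up_set_def by blast
    with z show "z \<in> {x, \<top>}"
      using up_set_subset_if_comparables_eq[OF C x(1) x_ne_bottom] by blast
  qed
  ultimately have "card (carrier L) < 4"
    by (rule card_carrier_less_4)
  moreover have "card {\<bottom>, y, x, \<top>} \<le> card (carrier L)"
    using x y by (intro card_le_card_carrier) auto
  moreover have "card {\<bottom>, y, x, \<top>} = 4"
    using x_ne_bottom x(2) y(3,4) y_ne_top bottom_neq_top by simp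
  ultimately show False
    by linarith
qed

lemma not_join_irreducible_above:
  assumes x: "x \<in> carrier L" and y: "y \<in> carrier L" "x \<sqsubseteq> y" "y \<noteq> x"
    and up_x: "up_set L x \<subseteq> {x, y, \<top>}" and card: "4 \<le> card (carrier L)"
  shows "\<not> join_irreducible L y"
proof
  assume "join_irreducible L y"
  moreover have "up_set L y \<subseteq> {y, \<top>}"
  proof
    fix z assume "z \<in> up_set L y"
    then have z: "z \<in> carrier L" "y \<sqsubseteq> z"
      unfolding up_set_def by auto
    have "\<not> y \<sqsubseteq> x"
      using le_antisym[OF y(2) _ x y(1)] y(3) by blast
    with z have "z \<noteq> x"
      by blast
    moreover have "z \<in> up_set L x"
      using le_trans[OF y(2) z(2) x y(1) z(1)] z(1) unfolding up_set_def by blast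
    ultimately show "z \<in> {y, \<top>}"
      using up_x by blast
  qed
  ultimately have "card (carrier L) < 4"
    by (rule card_carrier_less_4)
  with card show False
    by simp
qed

lemma card_comparables_ge_4_if_atom:
  assumes x: "x \<in> carrier L" "x \<noteq> \<bottom>"
    and atom: "\<And>z. z \<in> carrier L \<Longrightarrow> z \<sqsubseteq> x \<Longrightarrow> z \<noteq> x \<Longrightarrow> z = \<bottom>"
    and y: "y \<in> carrier L" "x \<sqsubseteq> y" "y \<noteq> x" "y \<noteq> \<top>"
  shows "4 \<le> card (comparables L x)"
proof (rule ccontr)
  have x_ne_top: "x \<noteq> \<top>"
    using x y top_le_iff by force
  have y_ne_bottom: "y \<noteq> \<bottom>"
    using x y le_bottom_iff by force
  have "y \<in> comparables L x"
    using x y unfolding comparables_def by simp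
  moreover assume "\<not> 4 \<le> card (comparables L x)"
  ultimately have C: "comparables L x = {\<bottom>, y, \<top>}"
    by (intro comparables_eq_if_card_le_3[OF x x_ne_top _ _ y_ne_bottom y(4)]) simp_all
  have up_x: "up_set L x \<subseteq> {x, y, \<top>}"
    using C x by (rule up_set_subset_if_comparables_eq)
  have "card (carrier L) < 2 * card {x, y, \<top>}"
    using card_carrier_less_join_irreducible[OF join_irreducible_if_atom[OF x atom] up_x] by simp
  moreover have "card {x, y, \<top>} \<le> 3"
    by (simp add: card_insert_le_m1)
  ultimately have card_le_5: "card (carrier L) \<le> 5"
    by linarith
  have four: "card {\<bottom>, x, y, \<top>} = 4"
    using x(2) x_ne_top y(3,4) y_ne_bottom bottom_neq_top by simp
  have "card {\<bottom>, x, y, \<top>} \<le> card (carrier L)"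
    using x y by (intro card_le_card_carrier) auto
  then have "\<not> join_irreducible L y"
    using not_join_irreducible_above[OF x(1) y(1-3) up_x] four by simp
  then obtain w where w: "w \<in> carrier L" "w \<sqsubseteq> y" "w \<noteq> y" "\<not> w \<sqsubseteq> x"
    using y x by (elim not_join_irreducibleE[OF partial_order_axioms]) auto
  have "w \<notin> {\<bottom>, x, y, \<top>}"
    using w x(1) y(1,4) top_le_iff by force
  then have "card {w, \<bottom>, x, y, \<top>} = 5"
    using four by simp
  then have carrier_eq: "carrier L = {w, \<bottom>, x, y, \<top>}"
    using card_le_5 w x y by (intro card_seteq[symmetric] finite_carrier) auto
  show False
  proof (rule not_all_below[OF y(1,4)])
    fix z assume "z \<in> carrier L" "z \<noteq> \<top>"
    then have "z \<in> {w, \<bottom>, x, y}"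
      unfolding carrier_eq by blast
    then show "z \<sqsubseteq> y"
      using w(2) x(1) y(1,2) by auto
  qed
qed

lemma atom_not_coatom:
  assumes x: "x \<in> carrier L" "x \<noteq> \<bottom>" "x \<noteq> \<top>"
    and atom: "\<And>z. z \<in> carrier L \<Longrightarrow> z \<sqsubseteq> x \<Longrightarrow> z \<noteq> x \<Longrightarrow> z = \<bottom>"
  shows "\<exists>y \<in> carrier L. x \<sqsubseteq> y \<and> y \<noteq> x \<and> y \<noteq> \<top>"
proof (rule ccontr)
  assume "\<not> ?thesis"
  then have "up_set L x \<subseteq> {x, \<top>}"
    unfolding up_set_def by auto
  with join_irreducible_if_atom[OF x(1,2) atom] have "card (carrier L) < 4"
    by (rule card_carrier_less_4)
  moreover have "card {\<bottom>, x, \<top>} = 3"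
    using x bottom_neq_top by simp
  ultimately have carrier_eq: "carrier L = {\<bottom>, x, \<top>}"
    using x by (intro card_seteq[symmetric] finite_carrier) auto
  show False
  proof (rule not_all_below[OF x(1,3)])
    fix z assume "z \<in> carrier L" "z \<noteq> \<top>"
    then have "z \<in> {\<bottom>, x}"
      unfolding carrier_eq by blast
    then show "z \<sqsubseteq> x"
      using x(1) by auto
  qed
qed

lemma card_comparables_ge_4:
  assumes "x \<in> carrier L" "x \<noteq> \<bottom>" "x \<noteq> \<top>"
  shows "4 \<le> card (comparables L x)"
proof (cases "\<exists>y \<in> carrier L. y \<sqsubseteq> x \<and> y \<noteq> x \<and> y \<noteq> \<bottom>")
  case True
  then show ?thesis
    using card_comparables_ge_4_if_not_atom assms by blast
next
  case False
  then have atom: "\<And>z. z \<in> carrier L \<Longrightarrow> z \<sqsubseteq> x \<Longrightarrow> z \<noteq> x \<Longrightarrow> z = \<bottom>"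
    by blast
  then show ?thesis
    using atom_not_coatom[OF assms atom] card_comparables_ge_4_if_atom[OF assms(1,2) atom] by blast
qed

end

theorem mainTheorem12:
  fixes L :: "'a gorder"
  assumes "min_counterexample L"
    and "x \<in> carrier L - {\<bottom>\<^bsub>L\<^esub>, \<top>\<^bsub>L\<^esub>}"
  shows "card {y \<in> carrier L - {x}. x \<sqsubseteq>\<^bsub>L\<^esub> y \<or> y \<sqsubseteq>\<^bsub>L\<^esub> x} \<ge> 4"
proof -
  have ce: "counterexample L"
    using assms(1) unfolding min_counterexample_def by simp
  then have "lattice L" "finite (carrier L)" "carrier L \<noteq> {}"
    unfolding counterexample_def by auto
  then have "bounded_lattice L"
    by (rule lattice.bounded_lattice_if_finite)
  then interpret counterexample_lattice L
    using ce by (intro counterexample_lattice.intro counterexample_lattice_axioms.intro)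
  show ?thesis
    using card_comparables_ge_4 assms(2) unfolding comparables_def by simp
qed

end
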